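(* Let $n\geq 3$, $0<q<n-2$, and let $\Omega$ be an open bounded convex domain in $\mathbb R^n$. Let $u\in C^{\infty}(\Omega)\cap C(\overline{\Omega})$ be a nonzero convex solution of $$\det D^2 u = |u|^{q}\ \text{in } \Omega,\qquad u=0\ \text{on } \partial\Omega.$$ Then for every $\beta\in\left(0,\frac{2}{n-q}\right)$ we have $u\in C^{0,\beta}(\overline{\Omega})$, and there is a constant $C$ depending only on $n,q,\beta$ and $\mathrm{diam}(\Omega)$ such that $$|u(x)|\leq C\,[\mathrm{dist}(x,\partial\Omega)]^{\beta}\quad\text{for all } x\in\Omega.$$
   Context: $\mathrm{dist}(x,\partial\Omega)$ is the Euclidean distance from $x$ to $\partial\Omega$ and $\mathrm{diam}(\Omega)$ is the diameter of $\Omega$. *)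

theory Defs
  imports "HOL-Analysis.Analysis"
begin

fun iter_partial :: "'n::finite list \<Rightarrow> (real^'n \<Rightarrow> real) \<Rightarrow> real^'n \<Rightarrow> real" where
  "iter_partial [] f = f"
| "iter_partial (i # is) f = (\<lambda>x. frechet_derivative (iter_partial is f) (at x) (axis i 1))"

definition smooth_on :: "(real^'n::finite) set \<Rightarrow> (real^'n \<Rightarrow> real) \<Rightarrow> bool" where
  "smooth_on S f \<longleftrightarrow> (\<forall>is. continuous_on S (iter_partial is f) \<and>
      (\<forall>x\<in>S. iter_partial is f differentiable (at x)))"

definition hessian :: "(real^'n::finite \<Rightarrow> real) \<Rightarrow> real^'n \<Rightarrow> real^'n^'n" where
  "hessian f x = (\<chi> i j. iter_partial [i, j] f x)"

definition holder_space :: "real \<Rightarrow> ('a::metric_space) set \<Rightarrow> ('a \<Rightarrow> real) \<Rightarrow> bool" where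
  "holder_space \<beta> S f \<longleftrightarrow> bounded (f ` S) \<and>
     (\<exists>L. \<forall>x\<in>S. \<forall>y\<in>S. \<bar>f x - f y\<bar> \<le> L * dist x y powr \<beta>)"

end

theory Submission
  imports Defs
begin

text \<open>
  Everything rests on comparison with explicit subsolutions. At an interior maximum of w - u the
  second derivatives of w along every line are at most those of u; a lower bound for det D^2 u
  in terms of its quadratic form (proved by symmetric Gaussian elimination, since D^2 u is not
  known to be symmetric) then contradicts det D^2 w > |u|^q = det D^2 u. As u is convex and
  vanishes on the boundary it is nonpositive, and a paraboloid shows |u| \<le> M.

  Near a boundary point p with supporting unit normal \<nu>, write s = (x - p) \<bullet> \<nu>. The barrier
  \<lambda> s^a (|x - p|^2 - s^2 - R^2) has det D^2 of order \<lambda>^n s^(n a - 2), so if already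
  |u| \<le> C s^b then |u|^q \<le> C^q s^(q b) is dominated as soon as n a - 2 \<le> q b, which gives
  |u| \<le> C' dist(x, \<partial>\<Omega>)^a. Starting from b = 0 and increasing the exponent by a fixed amount
  each time reaches every \<beta> < 2/(n - q). Finally, convexity turns the boundary decay into the
  Hoelder bound on the closure.
\<close>

section \<open>Determinants and quadratic forms\<close>

definition quad_form :: "real^'n^'n \<Rightarrow> real^'n \<Rightarrow> real" where
  "quad_form M v = (\<Sum>j\<in>UNIV. \<Sum>k\<in>UNIV. v$j * M$j$k * v$k)"

lemma inner_mult_vec_eq_quad_form: "v \<bullet> (M *v v) = quad_form M v"
  by (simp add: quad_form_def inner_vec_def matrix_vector_mult_def sum_distrib_left mult.assoc)

lemma quad_form_axis: "quad_form M (axis i 1) = M$i$i"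
  by (simp add: quad_form_def axis_def if_distrib[where f = "\<lambda>x. x * _"]
      if_distrib[where f = "\<lambda>x. _ * x"] cong: if_cong)

lemma quad_form_add_axis:
  fixes M :: "real^'n::finite^'n"
  assumes "v$i = 0"
  shows "quad_form M (v + t *s axis i 1)
    = quad_form M v + t * ((\<Sum>k\<in>UNIV. M$i$k * v$k) + (\<Sum>j\<in>UNIV. v$j * M$j$i)) + t^2 * M$i$i"
proof -
  let ?\<delta> = "\<lambda>j. if j = i then 1 else 0 :: real"
  have "quad_form M (v + t *s axis i 1)
      = (\<Sum>j\<in>UNIV. \<Sum>k\<in>UNIV. (v$j + t * ?\<delta> j) * M$j$k * (v$k + t * ?\<delta> k))"
    by (simp add: quad_form_def axis_def)
  also have "\<dots> = quad_form M v
      + t * (\<Sum>j\<in>UNIV. \<Sum>k\<in>UNIV. ?\<delta> j * M$j$k * v$k)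
      + t * (\<Sum>j\<in>UNIV. \<Sum>k\<in>UNIV. v$j * M$j$k * ?\<delta> k)
      + t^2 * (\<Sum>j\<in>UNIV. \<Sum>k\<in>UNIV. ?\<delta> j * M$j$k * ?\<delta> k)"
    by (simp only: quad_form_def algebra_simps sum.distrib sum_distrib_left power2_eq_square)
  moreover have "(\<Sum>k\<in>UNIV. if P then f k else 0) = (if P then (\<Sum>k\<in>UNIV. f k) else (0::real))"
    for P and f :: "'n \<Rightarrow> real"
    by simp
  ultimately show ?thesis
    by (simp add: if_distrib[where f = "\<lambda>x. x * _"] if_distrib[where f = "\<lambda>x. _ * x"]
        distrib_left cong: if_cong)
qed

lemma weighted_sum_squares_add_axis:
  fixes v :: "real^'n::finite"
  assumes "v$i = 0"
  shows "(\<Sum>j\<in>UNIV. d j * ((v + t *s axis i 1)$j)^2) = (\<Sum>j\<in>UNIV. d j * (v$j)^2) + d i * t^2"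
proof -
  have "(\<Sum>j\<in>UNIV. d j * ((v + t *s axis i 1)$j)^2)
      = (\<Sum>j\<in>UNIV. d j * (v$j)^2 + (if j = i then d i * t^2 else 0))"
    by (rule sum.cong) (auto simp: axis_def assms)
  then show ?thesis by (simp add: sum.distrib)
qed

definition shear_matrix :: "'n \<Rightarrow> ('n \<Rightarrow> real) \<Rightarrow> real^'n^'n::finite" where
  "shear_matrix i c = (\<chi> j k. (if j = k then 1 else 0) - (if j = i \<and> k \<noteq> i then c k else 0))"

lemma det_shear_matrix: "det (shear_matrix i c :: real^'n::finite^'n) = 1"
proof -
  let ?I = "mat 1 :: real^'n^'n"
  let ?x = "(\<Sum>k\<in>UNIV - {i}. (- c k) *s row k ?I)"
  have row_I: "row k ?I = axis k 1" for k
    by (simp add: row_def mat_def axis_def vec_eq_iff)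
  have "?x \<in> vec.span {row j ?I |j. j \<noteq> i}"
    by (intro vec.span_sum vec.span_scale vec.span_base) auto
  moreover have "?x $ m = (if m = i then 0 else - c m)" for m
    by (simp add: row_I axis_def if_distrib cong: if_cong)
  then have "(\<chi> k. if k = i then row i ?I + ?x else row k ?I) = shear_matrix i c"
    by (simp add: shear_matrix_def vec_eq_iff row_I axis_def)
  ultimately show ?thesis
    using det_row_span by fastforce
qed

lemma transpose_shear_matrix_mult_entry:
  fixes M :: "real^'n::finite^'n"
  shows "(transpose (shear_matrix i c) ** M)$j$k = M$j$k - (if j \<noteq> i then c j * M$i$k else 0)"
  by (simp add: shear_matrix_def transpose_def matrix_matrix_mult_def left_diff_distrib
      sum_subtractf if_distrib[where f = "\<lambda>x. x * _"] cong: if_cong)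

lemma mult_shear_matrix_entry:
  fixes M :: "real^'n::finite^'n"
  shows "(M ** shear_matrix i c)$j$k = M$j$k - (if k \<noteq> i then M$j$i * c k else 0)"
  by (simp add: shear_matrix_def matrix_matrix_mult_def right_diff_distrib
      sum_subtractf if_distrib[where f = "\<lambda>x. _ * x"] cong: if_cong)

lemma quadratic_nonneg_imp_ge:
  fixes a Q X Y :: real
  assumes a: "0 < a" and nonneg: "\<And>t. 0 \<le> Q + t * (X + Y) + t^2 * a"
  shows "X * Y / a \<le> Q"
proof -
  have "0 \<le> Q + (- (X + Y) / (2 * a)) * (X + Y) + (- (X + Y) / (2 * a))^2 * a"
    by (rule nonneg)
  also have "\<dots> = Q - (X + Y)^2 / (4 * a)"
    using a by (simp add: field_simps power2_eq_square)
  finally have "(X + Y)^2 / (4 * a) \<le> Q" by simp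
  moreover have "4 * (X * Y) \<le> (X + Y)^2"
    using zero_le_power2[of "X - Y"] by (simp add: power2_eq_square algebra_simps)
  then have "X * Y / a \<le> (X + Y)^2 / (4 * a)"
    using a by (simp add: field_simps)
  ultimately show ?thesis by linarith
qed

text \<open>Invariant of symmetric Gaussian elimination: the indices in S are already eliminated,
  with pivots at least d.\<close>
definition eliminated_on :: "'n::finite set \<Rightarrow> ('n \<Rightarrow> real) \<Rightarrow> real^'n^'n \<Rightarrow> bool" where
  "eliminated_on S d M \<longleftrightarrow> (\<forall>i\<in>S. \<forall>j. j \<noteq> i \<longrightarrow> M$i$j = 0 \<and> M$j$i = 0) \<and>
     (\<forall>i\<in>S. d i \<le> M$i$i) \<and>
     (\<forall>v. (\<forall>i\<in>S. v$i = 0) \<longrightarrow> (\<Sum>i\<in>UNIV. d i * (v$i)^2) \<le> quad_form M v)"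

definition eliminate_pivot :: "'n \<Rightarrow> real^'n^'n \<Rightarrow> real^'n^'n::finite" where
  "eliminate_pivot i M = transpose (shear_matrix i (\<lambda>j. M$j$i / M$i$i)) ** M
     ** shear_matrix i (\<lambda>k. M$i$k / M$i$i)"

lemma det_eliminate_pivot: "det (eliminate_pivot i M) = det M"
  by (simp add: eliminate_pivot_def det_mul det_shear_matrix)

lemma eliminate_pivot_entry:
  assumes "M$i$i \<noteq> 0"
  shows "eliminate_pivot i M $ j $ k = (if j = i \<and> k = i then M$i$i else if j = i \<or> k = i then 0
      else M$j$k - M$j$i * M$i$k / M$i$i)"
proof -
  have "eliminate_pivot i M $ j $ k = M$j$k - (if j \<noteq> i then M$j$i / M$i$i * M$i$k else 0)
      - (if k \<noteq> i then (M$j$i - (if j \<noteq> i then M$j$i / M$i$i * M$i$i else 0)) * (M$i$k / M$i$i)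
         else 0)"
    by (simp add: eliminate_pivot_def mult_shear_matrix_entry transpose_shear_matrix_mult_entry)
  then show ?thesis using assms by auto
qed

lemma quad_form_eliminate_pivot:
  assumes "M$i$i \<noteq> 0" and "v$i = 0"
  shows "quad_form (eliminate_pivot i M) v
    = quad_form M v - (\<Sum>k\<in>UNIV. M$i$k * v$k) * (\<Sum>j\<in>UNIV. v$j * M$j$i) / M$i$i"
proof -
  have "quad_form (eliminate_pivot i M) v
      = (\<Sum>j\<in>UNIV. \<Sum>k\<in>UNIV. v$j * M$j$k * v$k - (v$j * M$j$i) * (M$i$k * v$k) / M$i$i)"
    unfolding quad_form_def using assms
    by (intro sum.cong refl) (auto simp: eliminate_pivot_entry algebra_simps)
  then show ?thesis
    by (simp add: quad_form_def sum_subtractf sum_product sum_divide_distrib mult.commute)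
qed

lemma eliminated_on_insert:
  fixes M :: "real^'n::finite^'n"
  assumes M: "eliminated_on S d M" and i: "i \<notin> S" and d_pos: "\<And>j. 0 < d j"
  shows "eliminated_on (insert i S) d (eliminate_pivot i M)"
proof -
  have off_diag: "\<And>k j. k \<in> S \<Longrightarrow> j \<noteq> k \<Longrightarrow> M$k$j = 0 \<and> M$j$k = 0"
    and diag: "\<And>k. k \<in> S \<Longrightarrow> d k \<le> M$k$k"
    and form: "\<And>v. \<forall>k\<in>S. v$k = 0 \<Longrightarrow> (\<Sum>k\<in>UNIV. d k * (v$k)^2) \<le> quad_form M v"
    using M unfolding eliminated_on_def by blast+
  have "(\<Sum>k\<in>UNIV. d k * ((axis i (1::real))$k)^2) \<le> quad_form M (axis i 1)"
    using i by (intro form) (auto simp: axis_def)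
  then have pivot: "d i \<le> M$i$i"
    unfolding quad_form_axis
    by (simp add: axis_def power2_eq_square if_distrib[where f = "\<lambda>x. _ * x"] cong: if_cong)
  then have pivot_pos: "0 < M$i$i" using d_pos[of i] by linarith
  show ?thesis
    unfolding eliminated_on_def
  proof (intro conjI ballI allI impI)
    fix k j assume "k \<in> insert i S" "j \<noteq> k"
    then show "eliminate_pivot i M $ k $ j = 0" "eliminate_pivot i M $ j $ k = 0"
      using off_diag pivot_pos by (auto simp: eliminate_pivot_entry)
  next
    fix k assume "k \<in> insert i S"
    then show "d k \<le> eliminate_pivot i M $ k $ k"
      using pivot pivot_pos diag i off_diag by (auto simp: eliminate_pivot_entry)
  next
    fix v :: "real^'n" assume v: "\<forall>k\<in>insert i S. v$k = 0"
    then have vi: "v$i = 0" by auto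
    \<comment> \<open>The form restricted to the line v + t e_i stays above the weighted squares, so the
      Schur complement of the pivot does too.\<close>
    have "0 \<le> (quad_form M v - (\<Sum>k\<in>UNIV. d k * (v$k)^2))
        + t * ((\<Sum>k\<in>UNIV. M$i$k * v$k) + (\<Sum>j\<in>UNIV. v$j * M$j$i)) + t^2 * M$i$i" for t
    proof -
      have "(\<Sum>k\<in>UNIV. d k * ((v + t *s axis i 1)$k)^2) \<le> quad_form M (v + t *s axis i 1)"
        using v i by (intro form) (auto simp: axis_def)
      moreover have "0 \<le> d i * t^2" using d_pos[of i] by simp
      ultimately show ?thesis
        unfolding quad_form_add_axis[OF vi] weighted_sum_squares_add_axis[OF vi] by linarith
    qed
    from quadratic_nonneg_imp_ge[OF pivot_pos this]
    show "(\<Sum>k\<in>UNIV. d k * (v$k)^2) \<le> quad_form (eliminate_pivot i M) v"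
      using quad_form_eliminate_pivot[OF _ vi] pivot_pos by (simp add: mult.commute)
  qed
qed

lemma det_ge_prod_if_eliminated_on:
  fixes M :: "real^'n::finite^'n"
  assumes d_pos: "\<And>j. 0 < d j" and "finite T" and "eliminated_on (- T) d M"
  shows "prod d UNIV \<le> det M"
  using assms(2,3)
proof (induction T arbitrary: M rule: finite_induct)
  case empty
  then have "\<And>i j. j \<noteq> i \<Longrightarrow> M$i$j = 0" and diag: "\<And>i. d i \<le> M$i$i"
    unfolding eliminated_on_def by auto
  then have "det M = prod (\<lambda>i. M$i$i) UNIV" by (intro det_diagonal) metis
  moreover have "prod d UNIV \<le> prod (\<lambda>i. M$i$i) UNIV"
    by (rule prod_mono) (use d_pos diag less_imp_le in auto)
  ultimately show ?case by simp
next
  case (insert i T)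
  moreover have "i \<notin> - insert i T" and "insert i (- insert i T) = - T"
    using insert.hyps by auto
  ultimately show ?case
    using eliminated_on_insert[OF insert.prems _ d_pos] det_eliminate_pivot by metis
qed

lemma det_ge_prod_if_quad_form_ge:
  fixes M :: "real^'n::finite^'n"
  assumes "\<And>j. 0 < d j" and "\<And>v. (\<Sum>i\<in>UNIV. d i * (v$i)^2) \<le> quad_form M v"
  shows "prod d UNIV \<le> det M"
  by (rule det_ge_prod_if_eliminated_on[of d UNIV]) (auto simp: eliminated_on_def assms)

definition aniso_form :: "real \<Rightarrow> real \<Rightarrow> 'a::real_inner \<Rightarrow> 'a \<Rightarrow> real" where
  "aniso_form c1 c2 \<nu> v = c1 * ((norm v)^2 - (\<nu> \<bullet> v)^2) + c2 * (\<nu> \<bullet> v)^2"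

lemma quad_form_orthogonal_conj:
  fixes H :: "real^'n::finite^'n" and f :: "real^'n \<Rightarrow> real^'n"
  assumes "orthogonal_transformation f"
  shows "quad_form (transpose (matrix f) ** H ** matrix f) v = f v \<bullet> (H *v f v)"
proof -
  have "quad_form (transpose (matrix f) ** H ** matrix f) v
      = v \<bullet> (transpose (matrix f) *v (H *v (matrix f *v v)))"
    by (simp flip: inner_mult_vec_eq_quad_form add: matrix_vector_mul_assoc matrix_mul_assoc)
  also have "\<dots> = (matrix f *v v) \<bullet> (H *v (matrix f *v v))"
    by (metis dot_lmul_matrix vector_transpose_matrix)
  finally show ?thesis
    using assms by (simp add: orthogonal_transformation_linear)
qed

lemma det_orthogonal_conj:
  fixes H :: "real^'n::finite^'n" and f :: "real^'n \<Rightarrow> real^'n"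
  assumes "orthogonal_transformation f"
  shows "det (transpose (matrix f) ** H ** matrix f) = det H"
proof -
  have "\<bar>det (matrix f)\<bar> = 1" using assms by simp
  then have "det (matrix f) * det (matrix f) = 1" using abs_mult_self_eq[of "det (matrix f)"] by simp
  then show ?thesis by (simp add: det_mul mult_ac)
qed

lemma aniso_form_orthogonal_transformation:
  assumes "orthogonal_transformation f"
  shows "aniso_form c1 c2 (f \<nu>) (f v) = aniso_form c1 c2 \<nu> v"
  using assms by (simp add: aniso_form_def orthogonal_transformation_def orthogonal_transformation_norm)

lemma aniso_form_axis:
  fixes v :: "real^'n::finite"
  shows "aniso_form c1 c2 (axis k 1) v = (\<Sum>i\<in>UNIV. (if i = k then c2 else c1) * (v$i)^2)"
proof -
  have "(\<Sum>i\<in>UNIV. (if i = k then c2 else c1) * (v$i)^2)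
      = (\<Sum>i\<in>UNIV. c1 * (v$i)^2 + (if i = k then (c2 - c1) * (v$k)^2 else 0))"
    by (rule sum.cong) (auto simp: algebra_simps)
  also have "\<dots> = c1 * ((\<Sum>i\<in>UNIV. (v$i)^2) - (v$k)^2) + c2 * (v$k)^2"
    by (simp add: sum.distrib sum_distrib_left algebra_simps)
  moreover have "(norm v)^2 = (\<Sum>i\<in>UNIV. (v$i)^2)"
    unfolding power2_norm_eq_inner inner_vec_def by (simp add: power2_eq_square)
  ultimately show ?thesis
    by (simp add: aniso_form_def inner_axis')
qed

lemma det_ge_if_aniso_form_le:
  fixes H :: "real^'n::finite^'n"
  assumes \<nu>: "norm \<nu> = 1" and c: "0 < c1" "0 < c2"
    and form: "\<And>v. aniso_form c1 c2 \<nu> v \<le> v \<bullet> (H *v v)"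
  shows "c1^(CARD('n) - 1) * c2 \<le> det H"
proof -
  obtain k :: 'n where True by simp
  have "norm (axis k (1::real)) = norm \<nu>" using \<nu> by simp
  then obtain f where f: "orthogonal_transformation f" "f (axis k (1::real)) = \<nu>"
    by (rule orthogonal_transformation_exists)
  define d where "d = (\<lambda>i. if i = k then c2 else c1)"
  have "(\<Sum>i\<in>UNIV. d i * (v$i)^2) \<le> quad_form (transpose (matrix f) ** H ** matrix f) v" for v
    using form[of "f v"] aniso_form_orthogonal_transformation[OF f(1), of c1 c2 "axis k 1" v]
    by (simp add: quad_form_orthogonal_conj[OF f(1)] aniso_form_axis d_def f(2))
  then have "prod d UNIV \<le> det (transpose (matrix f) ** H ** matrix f)"
    by (rule det_ge_prod_if_quad_form_ge[rotated]) (use c in \<open>simp add: d_def\<close>)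
  then have "prod d UNIV \<le> det H" by (simp add: det_orthogonal_conj[OF f(1)])
  moreover have "prod d UNIV = c1^(CARD('n) - 1) * c2"
  proof -
    have "prod d UNIV = d k * prod d (UNIV - {k})" by (simp add: prod.remove)
    also have "prod d (UNIV - {k}) = prod (\<lambda>_. c1) (UNIV - {k})"
      by (rule prod.cong) (auto simp: d_def)
    finally show ?thesis by (simp add: d_def card_Diff_singleton mult.commute)
  qed
  ultimately show ?thesis by simp
qed

section \<open>Second derivatives along lines and comparison\<close>

definition second_deriv_along :: "('a::real_vector \<Rightarrow> real) \<Rightarrow> 'a \<Rightarrow> 'a \<Rightarrow> real \<Rightarrow> bool" where
  "second_deriv_along f y v W \<longleftrightarrow>
     (\<exists>\<delta>>0. \<exists>f'. (\<forall>t. \<bar>t\<bar> < \<delta> \<longrightarrow> ((\<lambda>t. f (y + t *\<^sub>R v)) has_real_derivative f' t) (at t)) \<and>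
        (f' has_real_derivative W) (at 0))"

lemma second_deriv_alongI:
  assumes "0 < \<delta>" "\<And>t. \<bar>t\<bar> < \<delta> \<Longrightarrow> ((\<lambda>t. f (y + t *\<^sub>R v)) has_real_derivative f' t) (at t)"
    and "(f' has_real_derivative W) (at 0)"
  shows "second_deriv_along f y v W"
  using assms unfolding second_deriv_along_def by blast

lemma second_deriv_along_diff:
  assumes "second_deriv_along f y v A" "second_deriv_along g y v B"
  shows "second_deriv_along (\<lambda>z. f z - g z) y v (A - B)"
proof -
  obtain \<delta>1 f' where "0 < \<delta>1" "\<And>t. \<bar>t\<bar> < \<delta>1 \<Longrightarrow> ((\<lambda>t. f (y + t *\<^sub>R v)) has_real_derivative f' t) (at t)"
    "(f' has_real_derivative A) (at 0)"
    using assms(1) unfolding second_deriv_along_def by blast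
  moreover obtain \<delta>2 g' where "0 < \<delta>2" "\<And>t. \<bar>t\<bar> < \<delta>2 \<Longrightarrow> ((\<lambda>t. g (y + t *\<^sub>R v)) has_real_derivative g' t) (at t)"
    "(g' has_real_derivative B) (at 0)"
    using assms(2) unfolding second_deriv_along_def by blast
  ultimately show ?thesis
    by (intro second_deriv_alongI[of "min \<delta>1 \<delta>2" _ _ _ "\<lambda>t. f' t - g' t"] DERIV_diff) auto
qed

lemma DERIV2_nonpos_at_local_max:
  fixes f f' :: "real \<Rightarrow> real"
  assumes \<delta>: "0 < \<delta>" and max: "\<And>t. \<bar>t\<bar> < \<delta> \<Longrightarrow> f t \<le> f 0"
    and f': "\<And>t. \<bar>t\<bar> < \<delta> \<Longrightarrow> (f has_real_derivative f' t) (at t)"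
    and f'': "(f' has_real_derivative L) (at 0)"
  shows "L \<le> 0"
proof (rule ccontr)
  assume "\<not> L \<le> 0"
  have "f' 0 = 0"
    by (rule DERIV_local_max[OF f'[of 0] \<delta>]) (use \<delta> max in auto)
  moreover obtain \<epsilon> where \<epsilon>: "0 < \<epsilon>" "\<And>h. 0 < h \<Longrightarrow> h < \<epsilon> \<Longrightarrow> f' 0 < f' h"
    using DERIV_pos_inc_right[OF f''] \<open>\<not> L \<le> 0\<close> by force
  define b where "b = min \<epsilon> \<delta> / 2"
  have b: "0 < b" "b < \<epsilon>" "b < \<delta>" using \<epsilon> \<delta> by (auto simp: b_def)
  have "f 0 < f b"
  proof (rule DERIV_pos_imp_increasing_open[OF b(1)])
    show "\<exists>y. (f has_real_derivative y) (at x) \<and> 0 < y" if "0 < x" "x < b" for x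
      using f'[of x] \<epsilon>(2)[of x] that b \<open>f' 0 = 0\<close> by auto
    show "continuous_on {0..b} f"
      using b by (intro continuous_at_imp_continuous_on ballI DERIV_isCont[OF f']) auto
  qed
  moreover have "f b \<le> f 0" using max b by auto
  ultimately show False by simp
qed

lemma second_deriv_along_nonpos_at_local_max:
  assumes "second_deriv_along f y v W" and "0 < \<epsilon>"
    and "\<And>t. \<bar>t\<bar> < \<epsilon> \<Longrightarrow> f (y + t *\<^sub>R v) \<le> f y"
  shows "W \<le> 0"
proof -
  obtain \<delta> f' where "0 < \<delta>" "\<And>t. \<bar>t\<bar> < \<delta> \<Longrightarrow> ((\<lambda>t. f (y + t *\<^sub>R v)) has_real_derivative f' t) (at t)"
    "(f' has_real_derivative W) (at 0)"
    using assms(1) unfolding second_deriv_along_def by blast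
  with assms(2,3) show ?thesis
    by (intro DERIV2_nonpos_at_local_max[of "min \<delta> \<epsilon>" "\<lambda>t. f (y + t *\<^sub>R v)" f']) auto
qed

lemma has_real_derivative_along_line:
  assumes "(f has_derivative f') (at (x + t *\<^sub>R v))"
  shows "((\<lambda>s. f (x + s *\<^sub>R v)) has_real_derivative f' v) (at t)"
proof -
  have "((\<lambda>s. f (x + s *\<^sub>R v)) has_derivative (\<lambda>h. f' (h *\<^sub>R v))) (at t)"
    by (rule has_derivative_compose[of "\<lambda>s. x + s *\<^sub>R v" _ _ _ f, OF _ assms])
       (auto intro!: derivative_eq_intros)
  moreover have "(\<lambda>h. f' (h *\<^sub>R v)) = (\<lambda>h. f' v * h)"
    using linear_scale[OF has_derivative_linear[OF assms]] by (auto simp: fun_eq_iff)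
  ultimately show ?thesis by (simp add: has_field_derivative_def)
qed

lemma linear_eq_sum_axis:
  fixes f :: "real^'n::finite \<Rightarrow> real"
  assumes "linear f"
  shows "f v = (\<Sum>j\<in>UNIV. v$j * f (axis j 1))"
proof -
  have "f v = f (\<Sum>j\<in>UNIV. (v$j) *\<^sub>R axis j 1)"
    using basis_expansion[of v] by (simp add: scalar_mult_eq_scaleR)
  also have "\<dots> = (\<Sum>j\<in>UNIV. v$j * f (axis j 1))"
    using assms by (simp add: linear_sum linear_scale)
  finally show ?thesis .
qed

lemma open_contains_line:
  fixes x v :: "'a::real_normed_vector"
  assumes "open S" "x \<in> S"
  obtains \<delta> where "0 < \<delta>" "\<And>t. \<bar>t\<bar> < \<delta> \<Longrightarrow> x + t *\<^sub>R v \<in> S"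
proof -
  obtain e where e: "0 < e" "ball x e \<subseteq> S" using assms open_contains_ball by blast
  have pos: "0 < norm v + 1" by (simp add: add_nonneg_pos)
  have "x + t *\<^sub>R v \<in> S" if "\<bar>t\<bar> < e / (norm v + 1)" for t
  proof -
    have "\<bar>t\<bar> * norm v \<le> \<bar>t\<bar> * (norm v + 1)" by (simp add: mult_left_mono)
    also have "\<dots> < e" using that by (simp add: pos_less_divide_eq[OF pos])
    finally show ?thesis using e by (auto simp: dist_norm)
  qed
  moreover have "0 < e / (norm v + 1)" using e pos by simp
  ultimately show ?thesis using that by blast
qed

lemma smooth_on_second_deriv_along:
  fixes u :: "real^'n::finite \<Rightarrow> real"
  assumes u: "smooth_on \<Omega> u" and "open \<Omega>" and x: "x \<in> \<Omega>"
  shows "second_deriv_along u x v (v \<bullet> (hessian u x *v v))"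
proof -
  obtain \<delta> where \<delta>: "0 < \<delta>" and line_in: "\<And>t. \<bar>t\<bar> < \<delta> \<Longrightarrow> x + t *\<^sub>R v \<in> \<Omega>"
    using open_contains_line[OF \<open>open \<Omega>\<close> x] by blast
  have diff: "\<And>y is. y \<in> \<Omega> \<Longrightarrow> (iter_partial is u has_derivative
      frechet_derivative (iter_partial is u) (at y)) (at y)"
    using u unfolding smooth_on_def by (simp add: frechet_derivative_works)
  define u' where "u' = (\<lambda>t. \<Sum>j\<in>UNIV. v$j * iter_partial [j] u (x + t *\<^sub>R v))"
  show ?thesis
  proof (rule second_deriv_alongI[OF \<delta>])
    fix t :: real assume "\<bar>t\<bar> < \<delta>"
    note Du = diff[OF line_in[OF this], of "[]", unfolded iter_partial.simps]
    have "frechet_derivative u (at (x + t *\<^sub>R v)) v = u' t"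
      unfolding u'_def by (subst linear_eq_sum_axis[OF has_derivative_linear[OF Du]]) simp
    with has_real_derivative_along_line[OF Du]
    show "((\<lambda>t. u (x + t *\<^sub>R v)) has_real_derivative u' t) (at t)" by simp
  next
    have D1: "(iter_partial [j] u has_derivative frechet_derivative (iter_partial [j] u) (at x))
        (at (x + 0 *\<^sub>R v))" for j
      using diff[OF x, of "[j]"] by simp
    then have "(u' has_real_derivative (\<Sum>j\<in>UNIV. v$j * frechet_derivative (iter_partial [j] u) (at x) v)) (at 0)"
      unfolding u'_def by (intro DERIV_sum DERIV_cmult has_real_derivative_along_line)
    also have "(\<Sum>j\<in>UNIV. v$j * frechet_derivative (iter_partial [j] u) (at x) v)
        = (\<Sum>j\<in>UNIV. \<Sum>i\<in>UNIV. v$i * hessian u x $ i $ j * v$j)"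
    proof -
      have "frechet_derivative (iter_partial [j] u) (at x) v = (\<Sum>i\<in>UNIV. v$i * hessian u x $ i $ j)" for j
        by (subst linear_eq_sum_axis[OF has_derivative_linear[OF D1]]) (simp add: hessian_def)
      then show ?thesis by (simp add: sum_distrib_left algebra_simps)
    qed
    also have "\<dots> = v \<bullet> (hessian u x *v v)"
      by (subst sum.swap) (simp add: inner_mult_vec_eq_quad_form quad_form_def)
    finally show "(u' has_real_derivative v \<bullet> (hessian u x *v v)) (at 0)" .
  qed
qed

text \<open>A weak form of det D^2 w(y) > m, phrased through second derivatives along lines so that no
  Hessian of w is needed.\<close>
definition det_hessian_exceeds :: "(real^'n::finite \<Rightarrow> real) \<Rightarrow> real^'n \<Rightarrow> real \<Rightarrow> bool" where
  "det_hessian_exceeds w y m \<longleftrightarrow> (\<exists>c1 c2 \<nu>. 0 < c1 \<and> 0 < c2 \<and> norm \<nu> = 1 \<and>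
      m < c1^(CARD('n) - 1) * c2 \<and>
      (\<forall>v. \<exists>W. second_deriv_along w y v W \<and> aniso_form c1 c2 \<nu> v \<le> W))"

lemma comparison_principle:
  fixes u w :: "real^'n::finite \<Rightarrow> real"
  assumes "open \<Omega>" "bounded \<Omega>"
    and u: "smooth_on \<Omega> u" "continuous_on (closure \<Omega>) u"
    and w: "continuous_on (closure \<Omega>) w"
    and boundary: "\<And>y. y \<in> frontier \<Omega> \<Longrightarrow> w y \<le> u y"
    and interior: "\<And>y. y \<in> \<Omega> \<Longrightarrow> u y < w y \<Longrightarrow> det_hessian_exceeds w y (det (hessian u y))"
    and x: "x \<in> \<Omega>"
  shows "w x \<le> u x"
proof (rule ccontr)
  assume "\<not> w x \<le> u x"
  have "compact (closure \<Omega>)" using \<open>bounded \<Omega>\<close> by (simp add: compact_closure)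
  moreover have "closure \<Omega> \<noteq> {}" using x closure_subset by auto
  moreover have "continuous_on (closure \<Omega>) (\<lambda>y. w y - u y)"
    using u(2) w by (intro continuous_intros)
  ultimately have "\<exists>x0\<in>closure \<Omega>. \<forall>y\<in>closure \<Omega>. w y - u y \<le> w x0 - u x0"
    by (rule continuous_attains_sup)
  then obtain x0 where x0: "x0 \<in> closure \<Omega>"
    and max: "\<And>y. y \<in> closure \<Omega> \<Longrightarrow> w y - u y \<le> w x0 - u x0"
    by blast
  have pos: "u x0 < w x0"
    using max[of x] x \<open>\<not> w x \<le> u x\<close> closure_subset by force
  have "x0 \<in> \<Omega>"
    using x0 boundary[of x0] pos \<open>open \<Omega>\<close> by (force simp: frontier_def interior_open)
  then obtain c1 c2 \<nu> where c: "0 < c1" "0 < c2" "norm \<nu> = 1" "det (hessian u x0) < c1^(CARD('n) - 1) * c2"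
    and W: "\<And>v. \<exists>W. second_deriv_along w x0 v W \<and> aniso_form c1 c2 \<nu> v \<le> W"
    using interior pos unfolding det_hessian_exceeds_def by blast
  have "aniso_form c1 c2 \<nu> v \<le> v \<bullet> (hessian u x0 *v v)" for v
  proof -
    obtain W where "second_deriv_along w x0 v W" and "aniso_form c1 c2 \<nu> v \<le> W"
      using W by blast
    moreover obtain \<epsilon> where "0 < \<epsilon>" "\<And>t. \<bar>t\<bar> < \<epsilon> \<Longrightarrow> x0 + t *\<^sub>R v \<in> \<Omega>"
      using open_contains_line[OF \<open>open \<Omega>\<close> \<open>x0 \<in> \<Omega>\<close>] by blast
    ultimately have "W - v \<bullet> (hessian u x0 *v v) \<le> 0"
      using max closure_subset
      by (intro second_deriv_along_nonpos_at_local_max[of "\<lambda>y. w y - u y" x0 v _ \<epsilon>]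
          second_deriv_along_diff smooth_on_second_deriv_along[OF u(1) \<open>open \<Omega>\<close> \<open>x0 \<in> \<Omega>\<close>]) auto
    with \<open>aniso_form c1 c2 \<nu> v \<le> W\<close> show ?thesis by linarith
  qed
  from det_ge_if_aniso_form_le[OF c(3,1,2) this] c(4) show False by linarith
qed

section \<open>Convex domains\<close>

lemma eventually_shrink_mem:
  fixes \<Omega> :: "'a::euclidean_space set"
  assumes "convex \<Omega>" "open \<Omega>" "c \<in> \<Omega>" "p \<in> closure \<Omega>"
  shows "\<forall>\<^sub>F e in at_right 0. p - e *\<^sub>R (p - c) \<in> \<Omega>"
proof -
  have "\<forall>\<^sub>F e in at_right (0::real). 0 < e \<and> e \<le> 1"
    by (simp add: eventually_at_right_field) (rule exI[of _ 1], auto)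
  then show ?thesis
  proof eventually_elim
    case (elim e)
    then show ?case
      using mem_interior_closure_convex_shrink[of \<Omega> c p e] assms by (simp add: interior_open)
  qed
qed

lemma convex_on_closure_of_open:
  fixes \<Omega> :: "'a::euclidean_space set"
  assumes "convex \<Omega>" "open \<Omega>" "\<Omega> \<noteq> {}"
    and u: "convex_on \<Omega> u" "continuous_on (closure \<Omega>) u"
  shows "convex_on (closure \<Omega>) u"
proof (rule convex_onI)
  show "convex (closure \<Omega>)" using \<open>convex \<Omega>\<close> by simp
  fix t :: real and x y assume t: "0 < t" "t < 1" and x: "x \<in> closure \<Omega>" and y: "y \<in> closure \<Omega>"
  obtain c where c: "c \<in> \<Omega>" using \<open>\<Omega> \<noteq> {}\<close> by blast
  define shrink where "shrink = (\<lambda>e p. p - e *\<^sub>R (p - c))"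
  have shrink_in: "\<forall>\<^sub>F e in at_right 0. shrink e p \<in> \<Omega>" if "p \<in> closure \<Omega>" for p
    using eventually_shrink_mem[OF assms(1,2) c that] by (simp add: shrink_def)
  have lim: "((\<lambda>e. u (shrink e p)) \<longlongrightarrow> u p) (at_right 0)" if "p \<in> closure \<Omega>" for p
  proof (rule continuous_on_tendsto_compose[OF u(2) _ that])
    have "((\<lambda>e. shrink e p) \<longlongrightarrow> shrink 0 p) (at_right 0)"
      unfolding shrink_def by (intro tendsto_intros)
    then show "((\<lambda>e. shrink e p) \<longlongrightarrow> p) (at_right 0)" by (simp add: shrink_def)
    show "\<forall>\<^sub>F e in at_right 0. shrink e p \<in> closure \<Omega>"
      using shrink_in[OF that] by eventually_elim (use closure_subset in auto)
  qed
  define z where "z = (1 - t) *\<^sub>R x + t *\<^sub>R y"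
  have z: "z \<in> closure \<Omega>"
    using x y t convex_closure[OF \<open>convex \<Omega>\<close>] unfolding z_def by (simp add: convex_def)
  have "\<forall>\<^sub>F e in at_right 0. u (shrink e z) \<le> (1 - t) * u (shrink e x) + t * u (shrink e y)"
    using shrink_in[OF x] shrink_in[OF y]
  proof eventually_elim
    case (elim e)
    have "shrink e z = (1 - t) *\<^sub>R shrink e x + t *\<^sub>R shrink e y"
      by (simp add: shrink_def z_def algebra_simps)
    then show ?case using convex_onD[OF u(1), of t "shrink e x" "shrink e y"] t elim by simp
  qed
  moreover have "((\<lambda>e. (1 - t) * u (shrink e x) + t * u (shrink e y)) \<longlongrightarrow> (1 - t) * u x + t * u y)
      (at_right 0)"
    by (intro tendsto_intros lim x y)
  ultimately have "u z \<le> (1 - t) * u x + t * u y"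
    by (intro tendsto_le[OF trivial_limit_at_right_real _ lim[OF z]])
  then show "u ((1 - t) *\<^sub>R x + t *\<^sub>R y) \<le> (1 - t) * u x + t * u y" by (simp add: z_def)
qed

lemma closed_segment_meets_frontier:
  fixes \<Omega> :: "'a::real_normed_vector set"
  assumes "a \<in> \<Omega>" "b \<notin> \<Omega>"
  obtains f where "f \<in> closed_segment a b" "f \<in> frontier \<Omega>"
  using connected_Int_frontier[of "closed_segment a b" \<Omega>] assms by auto

lemma ray_meets_frontier:
  fixes \<Omega> :: "'a::real_normed_vector set"
  assumes "bounded \<Omega>" "open \<Omega>" "x \<in> \<Omega>" "v \<noteq> 0"
  obtains \<tau> where "0 < \<tau>" "x + \<tau> *\<^sub>R v \<in> frontier \<Omega>"
proof -
  obtain r where r: "0 < r" "\<And>y. y \<in> \<Omega> \<Longrightarrow> norm y \<le> r"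
    using \<open>bounded \<Omega>\<close> bounded_pos by metis
  define B where "B = (r + norm x + 1) / norm v"
  have B: "0 < B" using r \<open>v \<noteq> 0\<close> by (simp add: B_def add_pos_nonneg)
  have "norm (B *\<^sub>R v) = r + norm x + 1"
    using \<open>v \<noteq> 0\<close> r by (simp add: B_def add_pos_nonneg)
  then have "r < norm (x + B *\<^sub>R v)"
    using norm_triangle_ineq4[of "x + B *\<^sub>R v" x] by simp
  then have "x + B *\<^sub>R v \<notin> \<Omega>" using r by force
  then obtain f where f: "f \<in> closed_segment x (x + B *\<^sub>R v)" "f \<in> frontier \<Omega>"
    using closed_segment_meets_frontier[OF \<open>x \<in> \<Omega>\<close>] by blast
  then obtain \<mu> where \<mu>: "0 \<le> \<mu>" "\<mu> \<le> 1" "f = x + (\<mu> * B) *\<^sub>R v"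
    unfolding closed_segment_def by (auto simp: algebra_simps)
  have "f \<noteq> x" using f(2) \<open>x \<in> \<Omega>\<close> \<open>open \<Omega>\<close> frontier_disjoint_eq by blast
  then have "0 < \<mu> * B" using \<mu> B by (auto simp: less_le)
  with \<mu>(3) f(2) show ?thesis using that by blast
qed

lemma convex_on_closure_nonpos:
  fixes u :: "real^'n::finite \<Rightarrow> real"
  assumes "bounded \<Omega>" "open \<Omega>" and u: "convex_on (closure \<Omega>) u"
    and boundary: "\<And>y. y \<in> frontier \<Omega> \<Longrightarrow> u y = 0" and x: "x \<in> closure \<Omega>"
  shows "u x \<le> 0"
proof (cases "x \<in> \<Omega>")
  case False
  with x show ?thesis using boundary \<open>open \<Omega>\<close> by (simp add: frontier_def interior_open)
next
  case True
  obtain k :: 'n where True by simp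
  obtain \<tau>1 where \<tau>1: "0 < \<tau>1" "x + \<tau>1 *\<^sub>R axis k 1 \<in> frontier \<Omega>"
    using ray_meets_frontier[OF assms(1,2) True, of "axis k 1"] by (auto simp: axis_eq_0_iff)
  obtain \<tau>2 where \<tau>2: "0 < \<tau>2" "x + \<tau>2 *\<^sub>R (- axis k 1) \<in> frontier \<Omega>"
    using ray_meets_frontier[OF assms(1,2) True, of "- axis k 1"] by (auto simp: axis_eq_0_iff)
  define t where "t = \<tau>1 / (\<tau>1 + \<tau>2)"
  have t: "0 \<le> t" "t \<le> 1" using \<tau>1 \<tau>2 by (auto simp: t_def)
  have "(1 - t) * \<tau>1 - t * \<tau>2 = 0" using \<tau>1 \<tau>2 by (simp add: t_def field_simps)
  moreover have "(1 - t) *\<^sub>R (x + \<tau>1 *\<^sub>R axis k 1) + t *\<^sub>R (x + \<tau>2 *\<^sub>R (- axis k 1))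
      = x + ((1 - t) * \<tau>1 - t * \<tau>2) *\<^sub>R axis k 1"
    by (simp add: vec_eq_iff algebra_simps)
  ultimately have "(1 - t) *\<^sub>R (x + \<tau>1 *\<^sub>R axis k 1) + t *\<^sub>R (x + \<tau>2 *\<^sub>R (- axis k 1)) = x"
    by simp
  then have "u x \<le> (1 - t) * u (x + \<tau>1 *\<^sub>R axis k 1) + t * u (x + \<tau>2 *\<^sub>R (- axis k 1))"
    using convex_onD[OF u t, of "x + \<tau>1 *\<^sub>R axis k 1" "x + \<tau>2 *\<^sub>R (- axis k 1)"] \<tau>1 \<tau>2
    by (simp add: frontier_def)
  then show ?thesis using boundary \<tau>1 \<tau>2 by simp
qed

lemma open_convex_supporting_normal:
  fixes \<Omega> :: "'a::euclidean_space set"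
  assumes "convex \<Omega>" "open \<Omega>" and p: "p \<in> frontier \<Omega>"
  obtains \<nu> where "norm \<nu> = 1" "\<And>y. y \<in> \<Omega> \<Longrightarrow> 0 < (y - p) \<bullet> \<nu>"
proof -
  have "p \<notin> \<Omega>" using p \<open>open \<Omega>\<close> frontier_disjoint_eq by blast
  moreover have "\<Omega> \<noteq> {}" using p by auto
  ultimately obtain a b where ab: "a \<noteq> 0" "a \<bullet> p \<le> b" "\<And>x. x \<in> \<Omega> \<Longrightarrow> b \<le> a \<bullet> x"
    using separating_hyperplane_sets[of "{p}" \<Omega>] \<open>convex \<Omega>\<close> by auto
  have "0 < (y - p) \<bullet> a" if y: "y \<in> \<Omega>" for y
  proof -
    obtain e where e: "0 < e" "ball y e \<subseteq> \<Omega>" using \<open>open \<Omega>\<close> y open_contains_ball by blast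
    define y' where "y' = y - (e / 2 / norm a) *\<^sub>R a"
    have "dist y y' < e" using e ab(1) by (simp add: y'_def dist_norm)
    then have "a \<bullet> p \<le> a \<bullet> y'" using e ab by force
    moreover have "a \<bullet> y' = a \<bullet> y - e / 2 * norm a"
      using ab(1) by (simp add: y'_def inner_diff_right power2_norm_eq_inner[symmetric] power2_eq_square)
    moreover have "0 < e / 2 * norm a" using e ab(1) by simp
    ultimately have "a \<bullet> p < a \<bullet> y" by linarith
    then show ?thesis by (simp add: inner_diff_left inner_diff_right inner_commute)
  qed
  then show ?thesis
    using that[of "a /\<^sub>R norm a"] ab(1) by (simp add: divide_pos_pos)
qed

lemma closure_inner_nonneg:
  fixes p \<nu> :: "'a::real_inner"
  assumes "\<And>y. y \<in> \<Omega> \<Longrightarrow> 0 < (y - p) \<bullet> \<nu>" and "z \<in> closure \<Omega>"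
  shows "0 \<le> (z - p) \<bullet> \<nu>"
proof -
  have "closed {z. 0 \<le> (z - p) \<bullet> \<nu>}"
    by (intro closed_Collect_le continuous_intros)
  then have "closure \<Omega> \<subseteq> {z. 0 \<le> (z - p) \<bullet> \<nu>}"
    using assms(1) by (intro closure_minimal) (auto intro: less_imp_le)
  then show ?thesis using assms(2) by blast
qed

lemma infdist_frontier_le_inner:
  fixes \<Omega> :: "'a::euclidean_space set"
  assumes \<nu>: "norm \<nu> = 1" and pos: "\<And>z. z \<in> \<Omega> \<Longrightarrow> 0 < (z - p) \<bullet> \<nu>" and y: "y \<in> \<Omega>"
  shows "infdist y (frontier \<Omega>) \<le> (y - p) \<bullet> \<nu>"
proof -
  define z where "z = y - ((y - p) \<bullet> \<nu>) *\<^sub>R \<nu>"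
  have "(z - p) \<bullet> \<nu> = 0"
    using \<nu> by (simp add: z_def inner_diff_left dot_square_norm)
  then have "z \<notin> \<Omega>" using pos by force
  then obtain f where f: "f \<in> closed_segment y z" "f \<in> frontier \<Omega>"
    using closed_segment_meets_frontier[OF y] by blast
  have "infdist y (frontier \<Omega>) \<le> dist y f" using infdist_le[OF f(2)] .
  also have "\<dots> \<le> dist y z" using dist_in_closed_segment[OF f(1)] by (simp add: dist_commute)
  also have "\<dots> = (y - p) \<bullet> \<nu>"
    using pos[OF y] \<nu> by (simp add: z_def dist_norm)
  finally show ?thesis .
qed

section \<open>Paraboloids and barriers\<close>

lemma paraboloid_second_deriv_along:
  fixes x0 y v :: "'a::real_inner"
  shows "second_deriv_along (\<lambda>z. c / 2 * ((norm (z - x0))^2 - r)) y v (c * (norm v)^2)"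
proof -
  define e where "e = y - x0"
  have "(norm (y + t *\<^sub>R v - x0))^2 = e \<bullet> e + 2 * t * (e \<bullet> v) + t^2 * (v \<bullet> v)" for t
    unfolding power2_norm_eq_inner e_def[symmetric]
    by (simp add: e_def algebra_simps inner_add_left inner_add_right inner_commute power2_eq_square)
  then have "((\<lambda>t. c / 2 * ((norm (y + t *\<^sub>R v - x0))^2 - r)) has_real_derivative
      c / 2 * (2 * (e \<bullet> v) + 2 * t * (v \<bullet> v))) (at t)" for t
    by (auto intro!: derivative_eq_intros simp: algebra_simps)
  moreover have "((\<lambda>t. c / 2 * (2 * (e \<bullet> v) + 2 * t * (v \<bullet> v))) has_real_derivative c * (norm v)^2) (at 0)"
    by (auto intro!: derivative_eq_intros simp: power2_norm_eq_inner)
  ultimately show ?thesis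
    by (intro second_deriv_alongI[of 1]) (auto simp: algebra_simps)
qed

lemma paraboloid_det_hessian_exceeds:
  fixes x0 z :: "real^'n::finite"
  assumes "0 < a" "m < a ^ CARD('n)"
  shows "det_hessian_exceeds (\<lambda>z. a / 2 * ((norm (z - x0))^2 - r)) z m"
proof -
  obtain k :: 'n where True by simp
  have "\<exists>W. second_deriv_along (\<lambda>z. a / 2 * ((norm (z - x0))^2 - r)) z v W
      \<and> aniso_form a a (axis k 1) v \<le> W" for v
    by (intro exI[of _ "a * (norm v)^2"] conjI paraboloid_second_deriv_along)
      (simp add: aniso_form_def algebra_simps)
  moreover have "a ^ (CARD('n) - 1) * a = a ^ CARD('n)" by (simp flip: power_Suc2)
  ultimately show ?thesis
    unfolding det_hessian_exceeds_def using assms by (intro exI[of _ a] exI[of _ "axis k 1"]) auto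
qed

definition barrier :: "real \<Rightarrow> real \<Rightarrow> real \<Rightarrow> 'a::real_inner \<Rightarrow> 'a \<Rightarrow> 'a \<Rightarrow> real" where
  "barrier lam a R2 p \<nu> z = lam * (((z - p) \<bullet> \<nu>) powr a * ((norm (z - p))^2 - ((z - p) \<bullet> \<nu>)^2 - R2))"

lemma barrier_second_deriv_along:
  fixes y p \<nu> v :: "'a::real_inner"
  defines "s \<equiv> (y - p) \<bullet> \<nu>" and "\<sigma> \<equiv> v \<bullet> \<nu>"
  assumes s: "0 < s"
  shows "second_deriv_along (barrier lam a R2 p \<nu>) y v
    (lam * (a * (a - 1) * \<sigma>^2 * s powr (a - 2) * ((norm (y - p))^2 - s^2 - R2)
      + 4 * a * \<sigma> * s powr (a - 1) * ((y - p) \<bullet> v - s * \<sigma>) + 2 * s powr a * ((norm v)^2 - \<sigma>^2)))"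
proof -
  define E where "E = (norm (y - p))^2 - s^2"
  define P where "P = (y - p) \<bullet> v - s * \<sigma>"
  define V where "V = (norm v)^2 - \<sigma>^2"
  have line: "barrier lam a R2 p \<nu> (y + t *\<^sub>R v)
      = lam * ((s + t * \<sigma>) powr a * (E + 2 * t * P + t^2 * V - R2))" for t
  proof -
    have "y + t *\<^sub>R v - p = (y - p) + t *\<^sub>R v" by (simp add: algebra_simps)
    then show ?thesis
      unfolding barrier_def E_def P_def V_def s_def \<sigma>_def power2_norm_eq_inner
      by (simp add: inner_add_left inner_add_right inner_commute power2_eq_square algebra_simps)
  qed
  define \<delta> where "\<delta> = s / (\<bar>\<sigma>\<bar> + 1)"
  have "0 < \<delta>" using s by (simp add: \<delta>_def add_nonneg_pos)
  have pos: "0 < s + t * \<sigma>" if "\<bar>t\<bar> < \<delta>" for t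
  proof -
    have "\<bar>t * \<sigma>\<bar> \<le> \<bar>t\<bar> * (\<bar>\<sigma>\<bar> + 1)" by (simp add: abs_mult mult_left_mono)
    also have "\<dots> < s" using that s by (simp add: \<delta>_def pos_less_divide_eq add_nonneg_pos)
    finally show ?thesis by linarith
  qed
  show ?thesis
  proof (rule second_deriv_alongI[OF \<open>0 < \<delta>\<close>])
    fix t :: real assume "\<bar>t\<bar> < \<delta>"
    with pos show "((\<lambda>t. barrier lam a R2 p \<nu> (y + t *\<^sub>R v)) has_real_derivative
        lam * (a * \<sigma> * (s + t * \<sigma>) powr (a - 1) * (E + 2 * t * P + t^2 * V - R2)
          + (s + t * \<sigma>) powr a * (2 * P + 2 * t * V))) (at t)"
      unfolding line by (auto intro!: derivative_eq_intros simp: algebra_simps)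
  next
    show "((\<lambda>t. lam * (a * \<sigma> * (s + t * \<sigma>) powr (a - 1) * (E + 2 * t * P + t^2 * V - R2)
          + (s + t * \<sigma>) powr a * (2 * P + 2 * t * V))) has_real_derivative
        lam * (a * (a - 1) * \<sigma>^2 * s powr (a - 2) * ((norm (y - p))^2 - s^2 - R2)
          + 4 * a * \<sigma> * s powr (a - 1) * ((y - p) \<bullet> v - s * \<sigma>) + 2 * s powr a * ((norm v)^2 - \<sigma>^2))) (at 0)"
      using s unfolding E_def P_def V_def
      by (auto intro!: derivative_eq_intros simp: algebra_simps power2_eq_square)
  qed
qed

lemma barrier_quadratic_ineq:
  fixes s a d E V P \<sigma> R2 :: real
  assumes s: "0 < s" and a: "0 < a" "a < 1" and d: "0 < d" and E: "0 \<le> E" "E \<le> d^2"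
    and V: "0 \<le> V" and P: "P^2 \<le> E * V" and R2: "R2 = d^2 * (2 + 4 * a / (1 - a))"
  shows "V + a * (1 - a) * d^2 * \<sigma>^2 / s^2
    \<le> a * (a - 1) * \<sigma>^2 * (E - R2) / s^2 + 4 * a * \<sigma> * P / s + 2 * V"
proof -
  define z where "z = 2 * a * \<sigma> / s"
  have "0 \<le> z^2 * d^2 + 2 * z * P + V"
  proof -
    have "P^2 \<le> d^2 * V" using P E V by (meson mult_right_mono order_trans)
    then have "(z * d^2 + P)^2 \<le> d^2 * (z^2 * d^2 + 2 * z * P + V)"
      by (simp add: power2_eq_square algebra_simps)
    then have "0 \<le> d^2 * (z^2 * d^2 + 2 * z * P + V)"
      using zero_le_power2[of "z * d^2 + P"] by linarith
    then show ?thesis using d by (simp add: zero_le_mult_iff)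
  qed
  moreover have "4 * a^2 * d^2 \<le> a * (1 - a) * (R2 - E - d^2)"
  proof -
    have "4 * a^2 * d^2 = a * (1 - a) * (R2 - 2 * d^2)"
      using a by (simp add: R2 field_simps power2_eq_square)
    also have "\<dots> \<le> a * (1 - a) * (R2 - E - d^2)"
      using a E by (intro mult_left_mono) auto
    finally show ?thesis .
  qed
  then have "4 * a^2 * d^2 * (\<sigma>^2 / s^2) \<le> a * (1 - a) * (R2 - E - d^2) * (\<sigma>^2 / s^2)"
    by (rule mult_right_mono) simp
  moreover have "z^2 * d^2 = 4 * a^2 * d^2 * (\<sigma>^2 / s^2)"
    by (simp add: z_def power_divide power_mult_distrib)
  moreover have "a * (a - 1) * \<sigma>^2 * (E - R2) / s^2 + 4 * a * \<sigma> * P / s + 2 * V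
      - (V + a * (1 - a) * d^2 * \<sigma>^2 / s^2)
      = a * (1 - a) * (R2 - E - d^2) * (\<sigma>^2 / s^2) + 2 * z * P + V"
    using s by (simp add: z_def field_simps power2_eq_square)
  ultimately show ?thesis by linarith
qed

lemma orthogonal_part_nonneg:
  fixes \<nu> e :: "'a::real_inner"
  assumes "norm \<nu> = 1"
  shows "(e \<bullet> \<nu>)^2 \<le> (norm e)^2"
  using power_mono[OF Cauchy_Schwarz_ineq2[of e \<nu>] abs_ge_zero, of 2] assms by simp

lemma orthogonal_part_Cauchy_Schwarz:
  fixes \<nu> e v :: "'a::real_inner"
  assumes "norm \<nu> = 1"
  shows "(e \<bullet> v - (e \<bullet> \<nu>) * (v \<bullet> \<nu>))^2 \<le> ((norm e)^2 - (e \<bullet> \<nu>)^2) * ((norm v)^2 - (v \<bullet> \<nu>)^2)"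
proof -
  have \<nu>\<nu>: "\<nu> \<bullet> \<nu> = 1" using assms by (simp add: dot_square_norm)
  define e' where "e' = e - (e \<bullet> \<nu>) *\<^sub>R \<nu>"
  define v' where "v' = v - (v \<bullet> \<nu>) *\<^sub>R \<nu>"
  have "e' \<bullet> e' = (norm e)^2 - (e \<bullet> \<nu>)^2" "v' \<bullet> v' = (norm v)^2 - (v \<bullet> \<nu>)^2"
    "e' \<bullet> v' = e \<bullet> v - (e \<bullet> \<nu>) * (v \<bullet> \<nu>)"
    unfolding e'_def v'_def power2_norm_eq_inner
    by (simp_all add: \<nu>\<nu> inner_diff_left inner_diff_right inner_commute power2_eq_square algebra_simps)
  with Cauchy_Schwarz_ineq[of e' v'] show ?thesis by simp
qed

lemma barrier_second_deriv_ge: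
  fixes y p \<nu> v :: "'a::real_inner"
  defines "s \<equiv> (y - p) \<bullet> \<nu>"
  assumes \<nu>: "norm \<nu> = 1" and s: "0 < s" and yp: "norm (y - p) \<le> d"
    and a: "0 < a" "a < 1" and lam: "0 < lam" and R2: "R2 = d^2 * (2 + 4 * a / (1 - a))"
  obtains W where "second_deriv_along (barrier lam a R2 p \<nu>) y v W"
    and "aniso_form (lam * s powr a) (lam * (a * (1 - a) * d^2) * s powr (a - 2)) \<nu> v \<le> W"
proof -
  define \<sigma> where "\<sigma> = v \<bullet> \<nu>"
  define E where "E = (norm (y - p))^2 - s^2"
  define P where "P = (y - p) \<bullet> v - s * \<sigma>"
  define V where "V = (norm v)^2 - \<sigma>^2"
  have "0 \<le> E" "0 \<le> V" "P^2 \<le> E * V"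
    using orthogonal_part_nonneg[OF \<nu>] orthogonal_part_Cauchy_Schwarz[OF \<nu>, of "y - p" v]
    by (simp_all add: E_def V_def P_def s_def \<sigma>_def)
  moreover have "E \<le> d^2"
    unfolding E_def using power_mono[OF yp norm_ge_zero, of 2] zero_le_power2[of s] by linarith
  moreover have "0 < d" using s yp Cauchy_Schwarz_ineq2[of "y - p" \<nu>] \<nu> by (simp add: s_def)
  ultimately have ineq: "V + a * (1 - a) * d^2 * \<sigma>^2 / s^2
      \<le> a * (a - 1) * \<sigma>^2 * (E - R2) / s^2 + 4 * a * \<sigma> * P / s + 2 * V"
    using barrier_quadratic_ineq[OF s a] R2 by blast
  have p1: "s powr (a - 1) = s powr a / s" and p2: "s powr (a - 2) = s powr a / s^2"
    using s by (simp_all add: powr_diff)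
  have W: "lam * (a * (a - 1) * \<sigma>^2 * s powr (a - 2) * ((norm (y - p))^2 - s^2 - R2)
        + 4 * a * \<sigma> * s powr (a - 1) * ((y - p) \<bullet> v - s * \<sigma>) + 2 * s powr a * ((norm v)^2 - \<sigma>^2))
      = (lam * s powr a) * (a * (a - 1) * \<sigma>^2 * (E - R2) / s^2 + 4 * a * \<sigma> * P / s + 2 * V)"
    unfolding p1 p2 E_def P_def V_def using s by (simp add: field_simps)
  have aniso: "aniso_form (lam * s powr a) (lam * (a * (1 - a) * d^2) * s powr (a - 2)) \<nu> v
      = (lam * s powr a) * (V + a * (1 - a) * d^2 * \<sigma>^2 / s^2)"
    unfolding aniso_form_def p2 V_def \<sigma>_def using s by (simp add: inner_commute field_simps)
  have "second_deriv_along (barrier lam a R2 p \<nu>) y v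
      (lam * (a * (a - 1) * \<sigma>^2 * s powr (a - 2) * ((norm (y - p))^2 - s^2 - R2)
        + 4 * a * \<sigma> * s powr (a - 1) * ((y - p) \<bullet> v - s * \<sigma>) + 2 * s powr a * ((norm v)^2 - \<sigma>^2)))"
    using barrier_second_deriv_along[of y p \<nu> lam a R2 v] s by (simp add: s_def \<sigma>_def)
  moreover have "0 \<le> lam * s powr a" using lam by simp
  ultimately show ?thesis
    using that mult_left_mono[OF ineq] unfolding W aniso by blast
qed

lemma power_pred_mult_powr_eq:
  fixes lam s a K :: real
  assumes s: "0 < s" and n: "0 < n"
  shows "(lam * s powr a) ^ (n - 1) * (lam * K * s powr (a - 2)) = lam ^ n * K * s powr (real n * a - 2)"
proof -
  have "(lam * s powr a) ^ (n - 1) = lam ^ (n - 1) * s powr (real (n - 1) * a)"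
    using s by (simp add: power_mult_distrib powr_power)
  moreover have "s powr (real (n - 1) * a) * s powr (a - 2) = s powr (real n * a - 2)"
    using n by (simp add: of_nat_diff algebra_simps flip: powr_add)
  moreover have "lam ^ (n - 1) * lam = lam ^ n"
    using n by (simp flip: power_Suc2)
  moreover have "lam ^ (n - 1) * s powr (real (n - 1) * a) * (lam * K * s powr (a - 2))
      = (lam ^ (n - 1) * lam) * K * (s powr (real (n - 1) * a) * s powr (a - 2))"
    by (simp only: mult_ac)
  ultimately show ?thesis by simp
qed

lemma barrier_det_hessian_exceeds:
  fixes z p \<nu> :: "real^'n::finite" and a lam d :: real
  defines "s \<equiv> (z - p) \<bullet> \<nu>"
  assumes \<nu>: "norm \<nu> = 1" and s: "0 < s" and zp: "norm (z - p) \<le> d"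
    and a: "0 < a" "a < 1" and lam: "0 < lam" and R2: "R2 = d^2 * (2 + 4 * a / (1 - a))"
    and m: "m < lam ^ CARD('n) * (a * (1 - a) * d^2) * s powr (real CARD('n) * a - 2)"
  shows "det_hessian_exceeds (barrier lam a R2 p \<nu>) z m"
proof -
  have "s \<le> d" using Cauchy_Schwarz_ineq2[of "z - p" \<nu>] \<nu> zp by (simp add: s_def)
  define c1 where "c1 = lam * s powr a"
  define c2 where "c2 = lam * (a * (1 - a) * d^2) * s powr (a - 2)"
  have "c1 ^ (CARD('n) - 1) * c2 = lam ^ CARD('n) * (a * (1 - a) * d^2) * s powr (real CARD('n) * a - 2)"
    unfolding c1_def c2_def by (rule power_pred_mult_powr_eq[OF s]) simp
  then have "m < c1 ^ (CARD('n) - 1) * c2" using m by simp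
  moreover have "0 < c1" "0 < c2" using lam s a \<open>s \<le> d\<close> by (simp_all add: c1_def c2_def)
  moreover have "\<exists>W. second_deriv_along (barrier lam a R2 p \<nu>) z v W \<and> aniso_form c1 c2 \<nu> v \<le> W" for v
    using barrier_second_deriv_ge[OF \<nu> _ zp a lam R2] s unfolding c1_def c2_def s_def by blast
  ultimately show ?thesis
    unfolding det_hessian_exceeds_def using \<nu> by blast
qed

lemma barrier_nonpos:
  assumes "0 \<le> lam" "0 \<le> (z - p) \<bullet> \<nu>" "norm (z - p) \<le> d" "d^2 \<le> R2"
  shows "barrier lam a R2 p \<nu> z \<le> 0"
proof -
  have "(norm (z - p))^2 \<le> d^2" using assms(3) by (simp add: power_mono)
  then have "(norm (z - p))^2 - ((z - p) \<bullet> \<nu>)^2 - R2 \<le> 0"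
    using assms(4) zero_le_power2[of "(z - p) \<bullet> \<nu>"] by linarith
  then show ?thesis
    unfolding barrier_def using assms(1,2) by (simp add: mult_nonneg_nonpos)
qed

lemma barrier_lower_bound:
  fixes x p \<nu> :: "'a::real_inner"
  assumes \<nu>: "norm \<nu> = 1" and "0 \<le> lam" "0 \<le> R2" "0 \<le> a"
    and S: "0 < (x - p) \<bullet> \<nu>" "(x - p) \<bullet> \<nu> \<le> D"
  shows "- (lam * R2 * D powr a) \<le> barrier lam a R2 p \<nu> x"
proof -
  define S where "S = (x - p) \<bullet> \<nu>"
  have "S \<le> norm (x - p)" using Cauchy_Schwarz_ineq2[of "x - p" \<nu>] \<nu> by (simp add: S_def)
  have "lam * (R2 * S powr a) \<le> lam * (R2 * D powr a)"
    using assms by (intro mult_left_mono powr_mono2) (auto simp: S_def)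
  then have "- (lam * R2 * D powr a) \<le> lam * (S powr a * (- R2))"
    by (simp add: algebra_simps)
  also have "\<dots> \<le> lam * (S powr a * ((norm (x - p))^2 - S^2 - R2))"
    using \<open>S \<le> norm (x - p)\<close> S assms by (intro mult_left_mono) (auto simp: S_def power_mono)
  also have "\<dots> = barrier lam a R2 p \<nu> x" by (simp add: barrier_def S_def)
  finally show ?thesis .
qed

section \<open>Boundary decay and Hoelder continuity\<close>

lemma infdist_frontier_pos:
  fixes \<Omega> :: "'a::euclidean_space set"
  assumes "open \<Omega>" "bounded \<Omega>" "x \<in> \<Omega>"
  shows "0 < infdist x (frontier \<Omega>)"
proof -
  have "\<Omega> \<noteq> UNIV" using \<open>bounded \<Omega>\<close> not_bounded_UNIV by metis
  then have "frontier \<Omega> \<noteq> {}" using \<open>x \<in> \<Omega>\<close> frontier_eq_empty by blast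
  moreover have "x \<notin> frontier \<Omega>" using assms frontier_disjoint_eq by blast
  ultimately show ?thesis using infdist_pos_not_in_closed by blast
qed

lemma nearest_frontier_point:
  fixes \<Omega> :: "'a::euclidean_space set"
  assumes "open \<Omega>" "bounded \<Omega>" "x \<in> \<Omega>"
  obtains p where "p \<in> frontier \<Omega>" "infdist x (frontier \<Omega>) = dist x p"
proof -
  have "\<Omega> \<noteq> UNIV" using \<open>bounded \<Omega>\<close> not_bounded_UNIV by metis
  then have "frontier \<Omega> \<noteq> {}" using \<open>x \<in> \<Omega>\<close> frontier_eq_empty by blast
  then show ?thesis using infdist_attains_inf[of "frontier \<Omega>" x] that by auto
qed

definition decays_at_frontier :: "real \<Rightarrow> real \<Rightarrow> 'a::metric_space set \<Rightarrow> ('a \<Rightarrow> real) \<Rightarrow> bool" where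
  "decays_at_frontier C \<beta> \<Omega> u \<longleftrightarrow> (\<forall>x\<in>\<Omega>. \<bar>u x\<bar> \<le> C * infdist x (frontier \<Omega>) powr \<beta>)"

lemma segment_extends_to_frontier:
  fixes \<Omega> :: "'a::real_normed_vector set"
  assumes "bounded \<Omega>" "open \<Omega>" "x \<in> \<Omega>" "y \<in> closure \<Omega>" "y \<noteq> x"
  obtains \<tau> where "1 \<le> \<tau>" "x + \<tau> *\<^sub>R (y - x) \<in> frontier \<Omega>"
proof (cases "y \<in> frontier \<Omega>")
  case True then show ?thesis using that[of 1] by auto
next
  case False
  then have "y \<in> \<Omega>" using assms(2,4) by (simp add: frontier_def interior_open)
  moreover have "y - x \<noteq> 0" using assms(5) by simp
  ultimately obtain \<tau> where "0 < \<tau>" "y + \<tau> *\<^sub>R (y - x) \<in> frontier \<Omega>"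
    using ray_meets_frontier[OF assms(1,2)] by metis
  moreover have "y + \<tau> *\<^sub>R (y - x) = x + (1 + \<tau>) *\<^sub>R (y - x)" by (simp add: algebra_simps)
  ultimately show ?thesis using that[of "1 + \<tau>"] by auto
qed

lemma convex_on_le_if_zero_beyond:
  assumes u: "convex_on S u" and "x \<in> S" "x + \<tau> *\<^sub>R (y - x) \<in> S"
    and zero: "u (x + \<tau> *\<^sub>R (y - x)) = 0" and \<tau>: "1 \<le> \<tau>"
  shows "u y \<le> (1 - 1 / \<tau>) * u x"
proof -
  have "y = (1 - 1 / \<tau>) *\<^sub>R x + (1 / \<tau>) *\<^sub>R (x + \<tau> *\<^sub>R (y - x))"
    using \<tau> by (simp add: algebra_simps)
  then show ?thesis
    using convex_onD[OF u, of "1 / \<tau>" x "x + \<tau> *\<^sub>R (y - x)"] \<tau> assms(2,3) zero by simp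
qed

lemma div_le_powr_if_decay:
  fixes U C D r \<tau> \<beta> :: real
  assumes U: "0 \<le> U" "U \<le> C * D powr \<beta>" and D: "0 < D" "D \<le> \<tau> * r"
    and "0 < r" "1 \<le> \<tau>" "0 < \<beta>" "\<beta> \<le> 1" "0 \<le> C"
  shows "U / \<tau> \<le> C * r powr \<beta>"
proof (cases "D \<le> r")
  case True
  have "U / \<tau> \<le> U" using U(1) \<open>1 \<le> \<tau>\<close> by (simp add: divide_le_eq mult_le_cancel_left1)
  also have "\<dots> \<le> C * r powr \<beta>"
    using U True assms by (meson mult_left_mono powr_mono2 order_trans less_imp_le)
  finally show ?thesis .
next
  case False
  have "1 / \<tau> \<le> r / D" using D assms by (simp add: field_simps)
  then have "U / \<tau> \<le> U * (r / D)"
    using mult_left_mono[of "1 / \<tau>" "r / D" U] U by simp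
  also have "\<dots> \<le> C * D powr \<beta> * (r / D)" using U D assms by (intro mult_right_mono) auto
  also have "\<dots> = C * r * D powr (\<beta> - 1)" using D by (simp add: powr_diff)
  also have "\<dots> \<le> C * r * r powr (\<beta> - 1)"
    using False assms by (intro mult_left_mono powr_mono2') auto
  also have "\<dots> = C * r powr \<beta>" using assms by (simp add: powr_diff)
  finally show ?thesis .
qed

lemma convex_increment_le_decay:
  fixes \<Omega> :: "(real^'n::finite) set"
  assumes "open \<Omega>" "bounded \<Omega>" and u: "convex_on (closure \<Omega>) u"
    and boundary: "\<And>y. y \<in> frontier \<Omega> \<Longrightarrow> u y = 0"
    and C: "0 \<le> C" and \<beta>: "0 < \<beta>" "\<beta> \<le> 1" and decay: "decays_at_frontier C \<beta> \<Omega> u"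
    and x: "x \<in> closure \<Omega>" and y: "y \<in> closure \<Omega>"
  shows "u y - u x \<le> C * dist x y powr \<beta>"
proof -
  have nonpos: "u z \<le> 0" if "z \<in> closure \<Omega>" for z
    using convex_on_closure_nonpos[OF assms(2,1) u boundary that] .
  show ?thesis
  proof (cases "x \<in> \<Omega> \<and> y \<noteq> x")
    case False
    then have "u x = 0 \<or> y = x"
      using x boundary \<open>open \<Omega>\<close> by (auto simp: frontier_def interior_open)
    moreover have "0 \<le> C * dist x y powr \<beta>" using C by simp
    ultimately show ?thesis using nonpos[OF y] by auto
  next
    case True
    then have xO: "x \<in> \<Omega>" and "y \<noteq> x" by auto
    obtain \<tau> where \<tau>: "1 \<le> \<tau>" and z: "x + \<tau> *\<^sub>R (y - x) \<in> frontier \<Omega>"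
      using segment_extends_to_frontier[OF assms(2,1) xO y \<open>y \<noteq> x\<close>] by blast
    have "u y \<le> (1 - 1 / \<tau>) * u x"
      using convex_on_le_if_zero_beyond[OF u x _ boundary[OF z] \<tau>] z by (simp add: frontier_def)
    then have "u y - u x \<le> \<bar>u x\<bar> / \<tau>"
      using nonpos[OF x] by (simp add: algebra_simps)
    also have "\<dots> \<le> C * dist x y powr \<beta>"
    proof (rule div_le_powr_if_decay[OF _ _ _ _ _ \<tau> \<beta> C])
      show "\<bar>u x\<bar> \<le> C * infdist x (frontier \<Omega>) powr \<beta>"
        using decay xO by (simp add: decays_at_frontier_def)
      show "0 < infdist x (frontier \<Omega>)" using infdist_frontier_pos[OF assms(1,2) xO] .
      have "infdist x (frontier \<Omega>) \<le> dist x (x + \<tau> *\<^sub>R (y - x))" using z by (rule infdist_le)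
      then show "infdist x (frontier \<Omega>) \<le> \<tau> * dist x y"
        using \<tau> by (simp add: dist_norm norm_minus_commute)
      show "0 < dist x y" using \<open>y \<noteq> x\<close> by simp
    qed simp
    finally show ?thesis .
  qed
qed

lemma holder_space_if_decays_at_frontier:
  fixes \<Omega> :: "(real^'n::finite) set"
  assumes "open \<Omega>" "bounded \<Omega>" and u: "convex_on (closure \<Omega>) u" "continuous_on (closure \<Omega>) u"
    and "\<And>y. y \<in> frontier \<Omega> \<Longrightarrow> u y = 0"
    and "0 \<le> C" "0 < \<beta>" "\<beta> \<le> 1" "decays_at_frontier C \<beta> \<Omega> u"
  shows "holder_space \<beta> (closure \<Omega>) u"
  unfolding holder_space_def
proof (intro conjI exI ballI)
  show "bounded (u ` closure \<Omega>)"
    using assms(2) u(2) by (intro compact_imp_bounded compact_continuous_image) auto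
  fix x y assume "x \<in> closure \<Omega>" "y \<in> closure \<Omega>"
  with convex_increment_le_decay[OF assms(1,2) u(1) assms(5-9)]
  show "\<bar>u x - u y\<bar> \<le> C * dist x y powr \<beta>"
    by (smt (verit) dist_commute)
qed

section \<open>Solutions of det D^2 u = |u|^q\<close>

text \<open>The hypotheses of the theorem except u \<noteq> 0, which the proof never uses.\<close>
definition ma_solution :: "real \<Rightarrow> real \<Rightarrow> (real^'n::finite) set \<Rightarrow> (real^'n \<Rightarrow> real) \<Rightarrow> bool" where
  "ma_solution q d \<Omega> u \<longleftrightarrow> open \<Omega> \<and> bounded \<Omega> \<and> convex \<Omega> \<and> \<Omega> \<noteq> {} \<and> diameter \<Omega> = d \<and>
     smooth_on \<Omega> u \<and> continuous_on (closure \<Omega>) u \<and> convex_on \<Omega> u \<and>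
     (\<forall>x\<in>\<Omega>. det (hessian u x) = \<bar>u x\<bar> powr q) \<and> (\<forall>x\<in>frontier \<Omega>. u x = 0)"

lemma ma_solutionD:
  assumes "ma_solution q d \<Omega> u"
  shows "open \<Omega>" "bounded \<Omega>" "convex \<Omega>" "\<Omega> \<noteq> {}" "smooth_on \<Omega> u"
    and "continuous_on (closure \<Omega>) u" "convex_on (closure \<Omega>) u"
    and "\<And>x. x \<in> \<Omega> \<Longrightarrow> det (hessian u x) = \<bar>u x\<bar> powr q"
    and "\<And>x. x \<in> frontier \<Omega> \<Longrightarrow> u x = 0"
    and "\<And>x. x \<in> closure \<Omega> \<Longrightarrow> u x \<le> 0"
    and "\<And>x y. x \<in> closure \<Omega> \<Longrightarrow> y \<in> closure \<Omega> \<Longrightarrow> dist x y \<le> d"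
proof -
  show "open \<Omega>" "bounded \<Omega>" "convex \<Omega>" "\<Omega> \<noteq> {}" "smooth_on \<Omega> u" "continuous_on (closure \<Omega>) u"
    and "\<And>x. x \<in> \<Omega> \<Longrightarrow> det (hessian u x) = \<bar>u x\<bar> powr q"
    and boundary: "\<And>x. x \<in> frontier \<Omega> \<Longrightarrow> u x = 0"
    using assms by (simp_all add: ma_solution_def)
  show convex: "convex_on (closure \<Omega>) u"
    using assms by (intro convex_on_closure_of_open) (simp_all add: ma_solution_def)
  show "\<And>x. x \<in> closure \<Omega> \<Longrightarrow> u x \<le> 0"
    using convex_on_closure_nonpos[OF \<open>bounded \<Omega>\<close> \<open>open \<Omega>\<close> convex boundary] by blast
  show "\<And>x y. x \<in> closure \<Omega> \<Longrightarrow> y \<in> closure \<Omega> \<Longrightarrow> dist x y \<le> d"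
    using assms diameter_bounded_bound[of "closure \<Omega>"] diameter_closure[of \<Omega>]
    by (simp add: ma_solution_def bounded_closure)
qed

lemma le_max_if_le_sublinear:
  fixes m q n c :: real
  assumes q: "0 < q" "q < n" and le: "m \<le> (m powr (q / n) + 1) * c / 2"
  shows "m \<le> max 1 (c powr (n / (n - q)))"
proof (cases "m \<le> 1")
  case False
  have mq: "1 \<le> m powr (q / n)" using False q by (simp add: ge_one_powr_ge_zero)
  have "0 < (m powr (q / n) + 1) * c / 2" using le False by linarith
  then have "0 < c" using mq by (simp add: zero_less_mult_iff)
  then have "(m powr (q / n) + 1) * c / 2 \<le> m powr (q / n) * c" using mq by simp
  moreover have "m = m powr (q / n) * m powr (1 - q / n)" using False by (simp flip: powr_add)
  ultimately have "m powr (q / n) * m powr (1 - q / n) \<le> m powr (q / n) * c" using le by linarith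
  then have le_c: "m powr (1 - q / n) \<le> c" by (rule mult_left_le_imp_le) (use mq False in simp)
  have e: "(1 - q / n) * (n / (n - q)) = 1" using q by (simp add: field_simps)
  have "m = (m powr (1 - q / n)) powr (n / (n - q))" unfolding powr_powr e using False by simp
  also have "\<dots> \<le> c powr (n / (n - q))" using le_c q by (intro powr_mono2) auto
  finally show ?thesis by simp
qed simp

lemma paraboloid_le_ma_solution:
  fixes \<Omega> :: "(real^'n::finite) set" and q d m :: real
  assumes u: "ma_solution q d \<Omega> u" and "0 \<le> q" and bound: "\<And>z. z \<in> \<Omega> \<Longrightarrow> \<bar>u z\<bar> \<le> m"
    and x0: "x0 \<in> \<Omega>" and z: "z \<in> \<Omega>"
  shows "(m powr (q / CARD('n)) + 1) / 2 * ((norm (z - x0))^2 - d^2) \<le> u z"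
proof -
  note u_facts = ma_solutionD[OF u]
  define a where "a = m powr (q / CARD('n)) + 1"
  have a: "0 < a" by (simp add: a_def add_nonneg_pos)
  have "a / 2 * ((norm (z - x0))^2 - d^2) \<le> u z"
  proof (rule comparison_principle[OF u_facts(1,2,5,6) _ _ _ z])
    show "continuous_on (closure \<Omega>) (\<lambda>z. a / 2 * ((norm (z - x0))^2 - d^2))"
      by (intro continuous_intros)
  next
    fix y assume y: "y \<in> frontier \<Omega>"
    have "dist y x0 \<le> d" using u_facts(11) y x0 closure_subset by (auto simp: frontier_def)
    then have "(norm (y - x0))^2 \<le> d^2" by (simp add: dist_norm power_mono)
    then show "a / 2 * ((norm (y - x0))^2 - d^2) \<le> u y"
      using a u_facts(9)[OF y] by (simp add: mult_nonneg_nonpos)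
  next
    fix y assume y: "y \<in> \<Omega>"
    have m: "0 \<le> m" using bound[OF y] by linarith
    have "\<bar>u y\<bar> powr q \<le> m powr q"
      using bound[OF y] \<open>0 \<le> q\<close> by (intro powr_mono2) auto
    also have "m powr q = (m powr (q / CARD('n))) ^ CARD('n)"
      using m by (cases "m = 0") (simp_all add: powr_power powr_powr)
    also have "\<dots> < a ^ CARD('n)"
      unfolding a_def by (simp add: power_strict_mono)
    finally show "det_hessian_exceeds (\<lambda>z. a / 2 * ((norm (z - x0))^2 - d^2)) y (det (hessian u y))"
      using paraboloid_det_hessian_exceeds[OF a] u_facts(8)[OF y] by simp
  qed
  then show ?thesis by (simp add: a_def)
qed

lemma ma_solution_abs_le:
  fixes \<Omega> :: "(real^'n::finite) set" and q d :: real
  assumes u: "ma_solution q d \<Omega> u" and q: "0 < q" "q < real CARD('n)" and y: "y \<in> closure \<Omega>"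
  shows "\<bar>u y\<bar> \<le> max 1 ((d^2) powr (real CARD('n) / (real CARD('n) - q)))"
proof -
  note u_facts = ma_solutionD[OF u]
  have "compact (closure \<Omega>)" using u_facts(2) by simp
  moreover have "closure \<Omega> \<noteq> {}" using u_facts(4) by simp
  moreover have "continuous_on (closure \<Omega>) (\<lambda>z. \<bar>u z\<bar>)" using u_facts(6) by (intro continuous_intros)
  ultimately obtain y0 where y0: "y0 \<in> closure \<Omega>" and max: "\<And>z. z \<in> closure \<Omega> \<Longrightarrow> \<bar>u z\<bar> \<le> \<bar>u y0\<bar>"
    using continuous_attains_sup[of "closure \<Omega>" "\<lambda>z. \<bar>u z\<bar>"] by blast
  define m where "m = \<bar>u y0\<bar>"
  have "m \<le> (m powr (q / CARD('n)) + 1) * d^2 / 2"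
  proof (cases "y0 \<in> \<Omega>")
    case True
    have "\<bar>u z\<bar> \<le> m" if "z \<in> \<Omega>" for z
      using max[of z] that closure_subset by (auto simp: m_def)
    from paraboloid_le_ma_solution[OF u less_imp_le[OF q(1)] this True True]
    show ?thesis using u_facts(10)[OF y0] by (simp add: m_def algebra_simps)
  next
    case False
    then have "y0 \<in> frontier \<Omega>" using y0 u_facts(1) by (simp add: frontier_def interior_open)
    then have "m = 0" using u_facts(9) by (simp add: m_def)
    then show ?thesis by simp
  qed
  then have "m \<le> max 1 ((d^2) powr (real CARD('n) / (real CARD('n) - q)))"
    using le_max_if_le_sublinear[of q "CARD('n)" m "d^2"] q by simp
  then show ?thesis using max[OF y] by (simp add: m_def)
qed

lemma barrier_le_ma_solution:
  fixes \<Omega> :: "(real^'n::finite) set" and q d a lam :: real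
  assumes u: "ma_solution q d \<Omega> u" and p: "p \<in> frontier \<Omega>"
    and \<nu>: "norm \<nu> = 1" "\<And>y. y \<in> \<Omega> \<Longrightarrow> 0 < (y - p) \<bullet> \<nu>"
    and a: "0 < a" "a < 1" and lam: "0 < lam" and R2: "R2 = d^2 * (2 + 4 * a / (1 - a))"
    and small: "\<And>z. z \<in> \<Omega> \<Longrightarrow>
      \<bar>u z\<bar> powr q < lam ^ CARD('n) * (a * (1 - a) * d^2) * ((z - p) \<bullet> \<nu>) powr (real CARD('n) * a - 2)"
    and x: "x \<in> \<Omega>"
  shows "barrier lam a R2 p \<nu> x \<le> u x"
proof -
  note u_facts = ma_solutionD[OF u]
  have dist_p: "norm (z - p) \<le> d" if "z \<in> closure \<Omega>" for z
    using u_facts(11)[OF that] p by (simp add: dist_norm frontier_def)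
  show ?thesis
  proof (rule comparison_principle[OF u_facts(1,2,5,6) _ _ _ x])
    show "continuous_on (closure \<Omega>) (barrier lam a R2 p \<nu>)"
      unfolding barrier_def
      by (intro continuous_intros continuous_on_powr') (use closure_inner_nonneg[OF \<nu>(2)] a in auto)
  next
    fix z assume z: "z \<in> frontier \<Omega>"
    then have "z \<in> closure \<Omega>" by (simp add: frontier_def)
    moreover have "1 \<le> 2 + 4 * a / (1 - a)" using a by simp
    then have "d^2 \<le> R2" using mult_left_mono[of 1 _ "d^2"] by (simp add: R2)
    ultimately show "barrier lam a R2 p \<nu> z \<le> u z"
      using barrier_nonpos[of lam z p \<nu> d R2 a] lam dist_p closure_inner_nonneg[OF \<nu>(2)] u_facts(9)[OF z]
      by simp
  next
    fix z assume z: "z \<in> \<Omega>"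
    show "det_hessian_exceeds (barrier lam a R2 p \<nu>) z (det (hessian u z))"
      by (rule barrier_det_hessian_exceeds[OF \<nu>(1) \<nu>(2)[OF z] dist_p a lam R2])
        (use z small u_facts(8) closure_subset in auto)
  qed
qed

lemma powr_lt_if_decay:
  fixes y C0 s d q b e K :: real
  assumes q: "0 < q" and C0: "0 \<le> C0" and s: "0 < s" "s \<le> d" and K: "0 < K"
    and y: "\<bar>y\<bar> \<le> C0 * s powr b" and e: "e \<le> q * b" and n: "0 < n"
  shows "\<bar>y\<bar> powr q < (1 + C0 powr q * d powr (q * b - e) / K) ^ n * K * s powr e"
proof -
  define lam where "lam = 1 + C0 powr q * d powr (q * b - e) / K"
  have "\<bar>y\<bar> powr q \<le> (C0 * s powr b) powr q" using y q by (intro powr_mono2) auto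
  also have "\<dots> = C0 powr q * (s powr e * s powr (q * b - e))"
    using C0 by (simp add: powr_mult powr_powr mult.commute flip: powr_add)
  also have "\<dots> \<le> C0 powr q * (s powr e * d powr (q * b - e))"
    using s e by (intro mult_left_mono powr_mono2) auto
  also have "\<dots> = (lam - 1) * K * s powr e"
    using K by (simp add: lam_def)
  also have "\<dots> < lam ^ n * K * s powr e"
    using K s n self_le_power[of lam n] by (intro mult_strict_right_mono) (auto simp: lam_def)
  finally show ?thesis by (simp add: lam_def)
qed

lemma ma_solution_decays_at_frontier_zero:
  fixes \<Omega> :: "(real^'n::finite) set" and q d :: real
  assumes u: "ma_solution q d \<Omega> u" and q: "0 < q" "q < real CARD('n)"
  shows "decays_at_frontier (max 1 ((d^2) powr (real CARD('n) / (real CARD('n) - q)))) 0 \<Omega> u"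
  unfolding decays_at_frontier_def
proof
  fix x assume x: "x \<in> \<Omega>"
  have "infdist x (frontier \<Omega>) \<noteq> 0"
    using infdist_frontier_pos[OF ma_solutionD(1,2)[OF u] x] by simp
  then show "\<bar>u x\<bar> \<le> max 1 ((d^2) powr (real CARD('n) / (real CARD('n) - q))) * infdist x (frontier \<Omega>) powr 0"
    using ma_solution_abs_le[OF u q] x closure_subset by auto
qed

lemma boundary_decay_step:
  fixes \<Omega> :: "(real^'n::finite) set" and q d \<beta>0 a C0 :: real
  assumes u: "ma_solution q d \<Omega> u" and decay: "decays_at_frontier C0 \<beta>0 \<Omega> u"
    and q: "0 < q" and \<beta>0: "0 \<le> \<beta>0" and a: "0 < a" "a < 1"
    and exponent: "real CARD('n) * a - 2 \<le> q * \<beta>0" and C0: "0 \<le> C0"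
  defines "lam \<equiv> 1 + C0 powr q * d powr (q * \<beta>0 - (real CARD('n) * a - 2)) / (a * (1 - a) * d^2)"
  shows "decays_at_frontier (lam * (d^2 * (2 + 4 * a / (1 - a)))) a \<Omega> u"
  unfolding decays_at_frontier_def
proof
  fix x assume x: "x \<in> \<Omega>"
  define R2 where "R2 = d^2 * (2 + 4 * a / (1 - a))"
  have lam: "1 \<le> lam" using a by (simp add: lam_def)
  have R2: "0 \<le> R2" using a by (simp add: R2_def)
  note u_facts = ma_solutionD[OF u]
  obtain p where p: "p \<in> frontier \<Omega>" and D: "infdist x (frontier \<Omega>) = dist x p"
    using nearest_frontier_point[OF u_facts(1,2) x] by blast
  obtain \<nu> where \<nu>: "norm \<nu> = 1" "\<And>y. y \<in> \<Omega> \<Longrightarrow> 0 < (y - p) \<bullet> \<nu>"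
    using open_convex_supporting_normal[OF u_facts(3,1) p] by blast
  have inner_le: "(z - p) \<bullet> \<nu> \<le> norm (z - p)" for z
    using Cauchy_Schwarz_ineq2[of "z - p" \<nu>] \<nu>(1) by simp
  have "\<bar>u z\<bar> powr q < lam ^ CARD('n) * (a * (1 - a) * d^2) * ((z - p) \<bullet> \<nu>) powr (real CARD('n) * a - 2)"
    if z: "z \<in> \<Omega>" for z
  proof -
    define s where "s = (z - p) \<bullet> \<nu>"
    have s: "0 < s" using \<nu>(2)[OF z] by (simp add: s_def)
    have "s \<le> d"
      using inner_le[of z] u_facts(11)[of z p] z p closure_subset by (force simp: s_def dist_norm frontier_def)
    have "\<bar>u z\<bar> \<le> C0 * infdist z (frontier \<Omega>) powr \<beta>0"
      using decay z by (simp add: decays_at_frontier_def)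
    also have "\<dots> \<le> C0 * s powr \<beta>0"
      using infdist_frontier_le_inner[OF \<nu> z] \<beta>0 C0
      by (auto simp: s_def intro!: mult_left_mono powr_mono2 infdist_nonneg)
    finally show ?thesis
      using powr_lt_if_decay[OF q C0 s \<open>s \<le> d\<close> _ _ exponent, of "a * (1 - a) * d^2" "u z" "CARD('n)"]
        s \<open>s \<le> d\<close> a
      by (simp add: lam_def s_def)
  qed
  then have "barrier lam a R2 p \<nu> x \<le> u x"
    using barrier_le_ma_solution[OF u p \<nu> a _ R2_def _ x] lam by simp
  moreover have "- (lam * R2 * infdist x (frontier \<Omega>) powr a) \<le> barrier lam a R2 p \<nu> x"
    using barrier_lower_bound[OF \<nu>(1) _ R2 _ \<nu>(2)[OF x]] inner_le[of x] lam a D by (simp add: dist_norm)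
  ultimately show "\<bar>u x\<bar> \<le> lam * (d^2 * (2 + 4 * a / (1 - a))) * infdist x (frontier \<Omega>) powr a"
    using u_facts(10)[of x] x closure_subset by (force simp: R2_def)
qed

lemma bootstrap_exponent_le:
  fixes n q \<beta> a b :: real
  assumes "q < n" "0 < n" "a \<le> b + (2 - (n - q) * \<beta>) / n" "b \<le> \<beta>"
  shows "n * a - 2 \<le> q * b"
proof -
  have "n * a \<le> n * (b + (2 - (n - q) * \<beta>) / n)"
    using mult_left_mono[OF assms(3), of n] assms(2) by simp
  also have "\<dots> = n * b + (2 - (n - q) * \<beta>)"
    using assms(2) by (simp add: distrib_left)
  also have "\<dots> \<le> q * b + 2"
    using mult_left_mono[OF assms(4), of "n - q"] assms(1) by (simp add: algebra_simps)
  finally show ?thesis by simp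
qed

lemma ma_solution_decays_at_frontier:
  fixes q \<beta> d :: real
  assumes q: "0 < q" "q < real CARD('n::finite)"
    and \<beta>: "0 < \<beta>" "\<beta> < 1" "\<beta> < 2 / (real CARD('n) - q)"
  obtains C where "0 \<le> C"
    and "\<And>(\<Omega> :: (real^'n) set) u. ma_solution q d \<Omega> u \<Longrightarrow> decays_at_frontier C \<beta> \<Omega> u"
proof -
  define n where "n = real CARD('n)"
  define uniform where "uniform b \<longleftrightarrow> (\<exists>C\<ge>0. \<forall>(\<Omega> :: (real^'n) set) u.
    ma_solution q d \<Omega> u \<longrightarrow> decays_at_frontier C b \<Omega> u)" for b
  define \<delta> where "\<delta> = (2 - (n - q) * \<beta>) / n"
  have n: "q < n" "0 < n" using q by (auto simp: n_def)
  have "\<beta> * (n - q) < 2" using \<beta>(3) n by (simp add: n_def field_simps)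
  then have \<delta>: "0 < \<delta>" using n by (simp add: \<delta>_def algebra_simps)
  have base: "uniform 0"
    unfolding uniform_def using ma_solution_decays_at_frontier_zero[OF _ q, where d = d]
    by (intro exI[of _ "max 1 ((d^2) powr (n / (n - q)))"]) (auto simp: n_def)
  have step: "uniform a"
    if "uniform b" "0 \<le> b" "b \<le> \<beta>" "0 < a" "a < 1" "a \<le> b + \<delta>" for a b
  proof -
    obtain C0 where C0: "0 \<le> C0"
      and decay: "\<And>(\<Omega> :: (real^'n) set) u. ma_solution q d \<Omega> u \<Longrightarrow> decays_at_frontier C0 b \<Omega> u"
      using \<open>uniform b\<close> by (auto simp: uniform_def)
    have exponent: "real CARD('n) * a - 2 \<le> q * b"
      using bootstrap_exponent_le[OF n] that unfolding \<delta>_def n_def by blast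
    define C1 where "C1 = (1 + C0 powr q * d powr (q * b - (real CARD('n) * a - 2)) / (a * (1 - a) * d^2))
      * (d^2 * (2 + 4 * a / (1 - a)))"
    have "decays_at_frontier C1 a \<Omega> u" if u: "ma_solution q d \<Omega> u" for \<Omega> :: "(real^'n) set" and u
      unfolding C1_def
      by (rule boundary_decay_step[OF u decay[OF u] q(1) \<open>0 \<le> b\<close> \<open>0 < a\<close> \<open>a < 1\<close> exponent C0])
    moreover have "0 \<le> C1" using \<open>0 < a\<close> \<open>a < 1\<close> by (simp add: C1_def)
    ultimately show ?thesis unfolding uniform_def by blast
  qed
  have "uniform (min \<beta> (real k * \<delta>))" for k
  proof (induction k)
    case 0
    then show ?case using base \<beta> by simp
  next
    case (Suc k)
    have "min \<beta> (real (Suc k) * \<delta>) \<le> min \<beta> (real k * \<delta>) + \<delta>"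
      using \<delta> by (simp add: min_def algebra_simps)
    with \<beta> \<delta> show ?case by (intro step[OF Suc.IH]) auto
  qed
  moreover obtain k :: nat where "\<beta> / \<delta> \<le> real k" using real_arch_simple by blast
  then have "min \<beta> (real k * \<delta>) = \<beta>" using \<delta> by (simp add: field_simps)
  ultimately have "uniform \<beta>" by metis
  then show ?thesis using that unfolding uniform_def by blast
qed

theorem proposition1p3:
  fixes q \<beta> d :: real
  assumes "CARD('n::finite) \<ge> 3"
    and "0 < q" and "q < real CARD('n) - 2"
    and "0 < \<beta>" and "\<beta> < 2 / (real CARD('n) - q)"
  shows "\<exists>C. \<forall>(\<Omega> :: (real^'n) set) (u :: real^'n \<Rightarrow> real).
           (open \<Omega> \<and> bounded \<Omega> \<and> convex \<Omega> \<and> \<Omega> \<noteq> {} \<and> diameter \<Omega> = d \<and>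
            smooth_on \<Omega> u \<and> continuous_on (closure \<Omega>) u \<and> convex_on \<Omega> u \<and>
            (\<exists>x\<in>\<Omega>. u x \<noteq> 0) \<and>
            (\<forall>x\<in>\<Omega>. det (hessian u x) = \<bar>u x\<bar> powr q) \<and>
            (\<forall>x\<in>frontier \<Omega>. u x = 0))
           \<longrightarrow> holder_space \<beta> (closure \<Omega>) u \<and>
               (\<forall>x\<in>\<Omega>. \<bar>u x\<bar> \<le> C * (infdist x (frontier \<Omega>)) powr \<beta>)"
proof -
  have "2 / (real CARD('n) - q) < 1" using assms(3) by simp
  then have \<beta>1: "\<beta> < 1" using assms(5) by linarith
  obtain C where C: "0 \<le> C"
    and decay: "\<And>(\<Omega> :: (real^'n) set) u. ma_solution q d \<Omega> u \<Longrightarrow> decays_at_frontier C \<beta> \<Omega> u"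
    by (rule ma_solution_decays_at_frontier[of q \<beta> d]) (use assms \<beta>1 in auto)
  have "holder_space \<beta> (closure \<Omega>) u" if u: "ma_solution q d \<Omega> u" for \<Omega> :: "(real^'n) set" and u
    using holder_space_if_decays_at_frontier[OF ma_solutionD(1,2,7,6,9)[OF u] C assms(4) _ decay[OF u]] \<beta>1
    by simp
  with decay show ?thesis
    unfolding ma_solution_def decays_at_frontier_def by (intro exI[of _ C]) blast
qed

end
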